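(* Let $\delta_1>0$ be an admissible one-dimensional sum-product exponent, i.e. a constant such that every finite, non-empty set $B\subseteq\mathbb{R}$ satisfies $|B+B|+|B\cdot B|\gtrsim |B|^{1+\delta_1}$. Let $d\in\mathbb{N}$ and let $A\subseteq\mathbb{R}^d$ be a finite, non-empty set. Then \[ |A+A|+|A\cdot A| \gtrsim_d |A|^{1+\delta_1/d}. \]
   Context: For $a=(a_1,\dots,a_d)$, $b=(b_1,\dots,b_d)\in\mathbb{R}^d$, addition and multiplication are coordinatewise: $a+b=(a_1+b_1,\dots,a_d+b_d)$, $a\cdot b=(a_1b_1,\dots,a_db_d)$. For finite sets $A,B$, $A+B=\{a+b: a\in A, b\in B\}$ and $A\cdot B=\{a\cdot b: a\in A,b\in B\}$. Notation: $X\gtrsim Y$ means $|X|\ge C|Y|(\log|A|)^{D}$ for some constants $C>0$ and $D$ (with $A$ the set under consideration); $X\gtrsim_z Y$ means the same with $C$ and $D$ allowed to depend on the parameter $z$. The paper takes $\delta_1$ to be the best known such exponent; by a result of Shakan, $\delta_1=1/3+5/5277$ is admissible. *)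

theory Defs
  imports "HOL-Analysis.Analysis"
begin

definition sumset :: "'a::plus set \<Rightarrow> 'a set \<Rightarrow> 'a set" where
  "sumset A B = {a + b | a b. a \<in> A \<and> b \<in> B}"

definition prodset :: "'a::times set \<Rightarrow> 'a set \<Rightarrow> 'a set" where
  "prodset A B = {a * b | a b. a \<in> A \<and> b \<in> B}"

end

theory Submission
  imports Defs
begin

(* Pigeonholing over the 2^n zero patterns, we may assume that A is constant outside a set S of
   coordinates and has no zero coordinate in S; we induct on d = |S|.  Project A to a coordinate
   i in S.  A pigeonhole over fibre sizes gives t and a set X of projections, each with a fibre
   of at least t points, such that |A| <= t |X| (1 + ln |A|).  If |X| >= |A|^(1/d), then above
   every point of X + X and of X * X lie at least t points of A + A, resp. A * A (right
   multiplication is injective since the coordinates in S are nonzero), and the one-dimensional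
   bound for X suffices.  Otherwise the fibres are large; on the half of X of one sign, 2x and x^2
   determine x, so the sum and product sets of distinct fibres are disjoint, and the induction
   hypothesis applies to each fibre, which has only d - 1 coordinates in S - {i}. *)

section \<open>Counting over fibres\<close>

definition image2 :: "('a \<Rightarrow> 'b \<Rightarrow> 'c) \<Rightarrow> 'a set \<Rightarrow> 'b set \<Rightarrow> 'c set" where
  "image2 f A B = case_prod f ` (A \<times> B)"

lemma mem_image2_iff: "c \<in> image2 f A B \<longleftrightarrow> (\<exists>a\<in>A. \<exists>b\<in>B. c = f a b)"
  by (auto simp: image2_def)

lemma finite_image2: "finite A \<Longrightarrow> finite B \<Longrightarrow> finite (image2 f A B)"
  by (simp add: image2_def)

lemma image2_mono: "A \<subseteq> A' \<Longrightarrow> B \<subseteq> B' \<Longrightarrow> image2 f A B \<subseteq> image2 f A' B'"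
  by (auto simp: image2_def)

lemma sumset_eq_image2: "sumset A B = image2 (+) A B"
  by (auto simp: sumset_def image2_def)

lemma prodset_eq_image2: "prodset A B = image2 (*) A B"
  by (auto simp: prodset_def image2_def)

lemma sum_card_fibres:
  assumes "finite A" "finite S"
  shows "(\<Sum>x\<in>S. card {a\<in>A. \<pi> a = x}) = card {a\<in>A. \<pi> a \<in> S}"
proof -
  have "{a\<in>A. \<pi> a \<in> S} = (\<Union>x\<in>S. {a\<in>A. \<pi> a = x})" by auto
  then show ?thesis
    using assms by (auto intro: card_UN_disjoint[symmetric])
qed

lemma card_eq_sum_card_fibres: "finite A \<Longrightarrow> card A = (\<Sum>x\<in>\<pi> ` A. card {a\<in>A. \<pi> a = x})"
proof -
  assume "finite A"
  moreover have "{a\<in>A. \<pi> a \<in> \<pi> ` A} = A" by auto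
  ultimately show ?thesis by (simp add: sum_card_fibres)
qed

lemma sum_card_fibres_le: "finite A \<Longrightarrow> (\<Sum>x\<in>S. card {a\<in>A. \<pi> a = x}) \<le> card A"
  by (cases "finite S") (auto simp: sum_card_fibres intro: card_mono)

lemma card_image2_ge_card_fibres:
  assumes "finite A" and X: "X \<subseteq> \<pi> ` A" "\<And>x. x \<in> X \<Longrightarrow> t \<le> card {a\<in>A. \<pi> a = x}"
    and hom: "\<And>a b. \<pi> (f a b) = g (\<pi> a) (\<pi> b)"
    and inj: "\<And>b. b \<in> A \<Longrightarrow> inj_on (\<lambda>a. f a b) A"
  shows "t * card (image2 g X X) \<le> card (image2 f A A)"
proof -
  let ?F = "image2 f A A"
  have "t \<le> card {v\<in>?F. \<pi> v = s}" if s: "s \<in> image2 g X X" for s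
  proof -
    obtain x y where xy: "x \<in> X" "y \<in> X" "s = g x y"
      using s unfolding mem_image2_iff by blast
    obtain b where b: "b \<in> A" "\<pi> b = y"
      using X(1) xy(2) by auto
    have "t \<le> card {a\<in>A. \<pi> a = x}"
      using X(2)[OF xy(1)] .
    also have "\<dots> = card ((\<lambda>a. f a b) ` {a\<in>A. \<pi> a = x})"
      using inj[OF b(1)] by (auto intro: card_image[symmetric] inj_on_subset)
    also have "\<dots> \<le> card {v\<in>?F. \<pi> v = s}"
      using assms(1) b xy hom by (intro card_mono) (auto simp: mem_image2_iff finite_image2)
    finally show ?thesis .
  qed
  then have "t * card (image2 g X X) \<le> (\<Sum>s\<in>image2 g X X. card {v\<in>?F. \<pi> v = s})"
    using sum_mono[of "image2 g X X" "\<lambda>_. t"] by (simp add: mult.commute)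
  also have "\<dots> \<le> card ?F"
    using assms(1) by (intro sum_card_fibres_le finite_image2)
  finally show ?thesis .
qed

lemma sum_card_image2_fibres_le:
  assumes "finite A"
    and hom: "\<And>a b. \<pi> (f a b) = g (\<pi> a) (\<pi> b)"
    and inj: "inj_on (\<lambda>x. g x x) X"
  shows "(\<Sum>x\<in>X. card (image2 f {a\<in>A. \<pi> a = x} {a\<in>A. \<pi> a = x})) \<le> card (image2 f A A)"
proof -
  let ?F = "image2 f A A"
  have "(\<Sum>x\<in>X. card (image2 f {a\<in>A. \<pi> a = x} {a\<in>A. \<pi> a = x}))
      \<le> (\<Sum>x\<in>X. card {v\<in>?F. \<pi> v = g x x})"
  proof (intro sum_mono card_mono)
    fix x
    show "finite {v\<in>?F. \<pi> v = g x x}"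
      using assms(1) by (simp add: finite_image2)
    show "image2 f {a\<in>A. \<pi> a = x} {a\<in>A. \<pi> a = x} \<subseteq> {v\<in>?F. \<pi> v = g x x}"
      by (auto simp: mem_image2_iff hom) blast
  qed
  also have "\<dots> = (\<Sum>s\<in>(\<lambda>x. g x x) ` X. card {v\<in>?F. \<pi> v = s})"
    using inj by (simp add: sum.reindex)
  also have "\<dots> \<le> card ?F"
    using assms(1) by (intro sum_card_fibres_le finite_image2)
  finally show ?thesis .
qed

lemma sum_eq_sum_card_superlevel:
  fixes h :: "'a \<Rightarrow> nat"
  assumes "finite X" "\<And>x. x \<in> X \<Longrightarrow> h x \<le> n"
  shows "(\<Sum>x\<in>X. h x) = (\<Sum>t=1..n. card {x\<in>X. t \<le> h x})"
proof -
  have "(\<Sum>x\<in>X. h x) = (\<Sum>x\<in>X. card {t\<in>{1..n}. t \<le> h x})"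
  proof (intro sum.cong refl)
    fix x assume "x \<in> X"
    then have "{t\<in>{1..n}. t \<le> h x} = {1..h x}"
      using assms(2) by fastforce
    then show "h x = card {t\<in>{1..n}. t \<le> h x}" by simp
  qed
  also have "\<dots> = (\<Sum>x\<in>X. \<Sum>t=1..n. if t \<le> h x then 1 else 0)"
    by (simp add: sum.inter_filter[symmetric])
  also have "\<dots> = (\<Sum>t=1..n. \<Sum>x\<in>X. if t \<le> h x then 1 else 0)"
    by (rule sum.swap)
  also have "\<dots> = (\<Sum>t=1..n. card {x\<in>X. t \<le> h x})"
    using assms(1) by (simp add: sum.inter_filter[symmetric])
  finally show ?thesis .
qed

lemma harm_le_one_plus_ln: "n \<ge> 1 \<Longrightarrow> harm n \<le> 1 + ln (real n)"
  using euler_mascheroni_sequence_decreasing[of 1 n] by (simp add: harm_def)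

lemma exists_large_superlevel:
  fixes h :: "'a \<Rightarrow> nat"
  assumes "finite X" "n = (\<Sum>x\<in>X. h x)" "n \<ge> 1"
  shows "\<exists>t\<ge>1. real n \<le> real t * real (card {x\<in>X. t \<le> h x}) * (1 + ln (real n))"
proof (rule ccontr)
  assume none: "\<not> ?thesis"
  define L where "L = 1 + ln (real n)"
  have L: "L \<ge> 1"
    using assms(3) by (simp add: L_def)
  have small: "real (card {x\<in>X. t \<le> h x}) < real n / L * inverse (real t)" if "t \<ge> 1" for t
  proof -
    have "real t * real (card {x\<in>X. t \<le> h x}) * L < real n"
      using none that by (auto simp: L_def)
    moreover have "0 < real t * L"
      using that L by simp
    ultimately have "real (card {x\<in>X. t \<le> h x}) < real n / (real t * L)"
      by (simp add: pos_less_divide_eq mult_ac)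
    then show ?thesis
      by (simp add: divide_inverse mult_ac)
  qed
  have "n = (\<Sum>t=1..n. card {x\<in>X. t \<le> h x})"
    unfolding assms(2) using assms(1) by (rule sum_eq_sum_card_superlevel) (use assms(1) in \<open>simp add: member_le_sum\<close>)
  then have "real n = real (\<Sum>t=1..n. card {x\<in>X. t \<le> h x})"
    by (rule arg_cong)
  also have "\<dots> = (\<Sum>t=1..n. real (card {x\<in>X. t \<le> h x}))"
    by (rule of_nat_sum)
  also have "\<dots> < (\<Sum>t=1..n. real n / L * inverse (real t))"
    using assms(3) small by (intro sum_strict_mono) auto
  also have "\<dots> = real n / L * harm n"
    by (simp add: harm_def sum_distrib_left)
  also have "\<dots> \<le> real n / L * L"
    using L harm_le_one_plus_ln[OF assms(3)] by (intro mult_left_mono) (auto simp: L_def)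
  also have "\<dots> = real n"
    using L by simp
  finally show False by simp
qed

lemma exists_large_fibre_level:
  assumes "finite A" "A \<noteq> {}"
  obtains t where "1 \<le> t"
    and "real (card A) \<le> real t * real (card {x \<in> \<pi> ` A. t \<le> card {a\<in>A. \<pi> a = x}}) * (1 + ln (real (card A)))"
proof -
  have "1 \<le> card A"
    using assms by (simp add: Suc_le_eq card_gt_0_iff)
  then show ?thesis
    using exists_large_superlevel[OF finite_imageI[OF assms(1)] card_eq_sum_card_fibres[OF assms(1), of \<pi>]] that
    by blast
qed

section \<open>Sum and product sets of vectors\<close>

definition sumprod_card :: "'a::{plus,times} set \<Rightarrow> real" where
  "sumprod_card A = real (card (sumset A A)) + real (card (prodset A A))"

lemma sumprod_card_nonneg: "sumprod_card A \<ge> 0"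
  by (simp add: sumprod_card_def)

lemma sumprod_card_singleton [simp]: "sumprod_card {a} = 2"
  by (simp add: sumprod_card_def sumset_def prodset_def)

lemma sumprod_card_mono: "finite B \<Longrightarrow> A \<subseteq> B \<Longrightarrow> sumprod_card A \<le> sumprod_card B"
  unfolding sumprod_card_def sumset_eq_image2 prodset_eq_image2
  by (intro add_mono of_nat_mono card_mono finite_image2 image2_mono) auto

definition active_coords :: "(real^'n) set \<Rightarrow> 'n set \<Rightarrow> bool" where
  "active_coords A S \<longleftrightarrow> (\<forall>v\<in>A. \<forall>w\<in>A. \<forall>j. j \<notin> S \<longrightarrow> v$j = w$j) \<and> (\<forall>v\<in>A. \<forall>j\<in>S. v$j \<noteq> 0)"

definition active_family :: "nat \<Rightarrow> (real^'n) set set" where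
  "active_family d = {A. \<exists>S. card S \<le> d \<and> active_coords A S}"

lemma active_coords_inj_on_times:
  assumes "active_coords A S" "b \<in> A"
  shows "inj_on (\<lambda>a. a * b) A"
proof (rule inj_onI)
  fix a a' assume a: "a \<in> A" "a' \<in> A" "a * b = a' * b"
  show "a = a'"
  proof (rule vec_eq_iff[THEN iffD2], rule allI)
    fix j
    have "a$j * b$j = a'$j * b$j"
      using arg_cong[OF a(3), of "\<lambda>v. v$j"] by simp
    moreover have "b$j \<noteq> 0" if "j \<in> S"
      using assms that unfolding active_coords_def by blast
    moreover have "a$j = a'$j" if "j \<notin> S"
      using assms(1) a(1,2) that unfolding active_coords_def by blast
    ultimately show "a$j = a'$j"
      by auto
  qed
qed

lemma active_coords_fibre: "active_coords A S \<Longrightarrow> active_coords {v\<in>A. v$i = x} (S - {i})"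
  unfolding active_coords_def by auto

lemma active_coords_empty_card_le:
  assumes "active_coords A {}"
  shows "card A \<le> 1"
proof (cases "finite A")
  case True
  have "\<forall>v\<in>A. \<forall>w\<in>A. v = w"
    using assms unfolding active_coords_def vec_eq_iff by blast
  then show ?thesis
    using card_le_Suc0_iff_eq[OF True] by (simp only: One_nat_def)
qed simp

lemma fibre_mem_active_family:
  assumes "active_coords A S" "card S \<le> Suc d" "i \<in> S"
  shows "{v\<in>A. v$i = x} \<in> active_family d"
proof -
  have "card (S - {i}) \<le> d"
    using assms(2,3) by simp
  then show ?thesis
    unfolding active_family_def using active_coords_fibre[OF assms(1)] by blast
qed

lemma sumprod_card_ge_card_fibres:
  fixes A :: "(real^'n) set"
  assumes "finite A" "active_coords A S"
    and X: "X \<subseteq> (\<lambda>v. v$i) ` A" "\<And>x. x \<in> X \<Longrightarrow> t \<le> card {v\<in>A. v$i = x}"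
  shows "real t * sumprod_card X \<le> sumprod_card A"
proof -
  have "t * card (sumset X X) \<le> card (sumset A A)"
    unfolding sumset_eq_image2 using assms(1) X
    by (rule card_image2_ge_card_fibres) (auto simp: inj_on_def)
  moreover have "t * card (prodset X X) \<le> card (prodset A A)"
    unfolding prodset_eq_image2 using assms(1) X
    by (rule card_image2_ge_card_fibres) (auto intro: active_coords_inj_on_times[OF assms(2)])
  ultimately show ?thesis
    unfolding sumprod_card_def distrib_left by (intro add_mono; metis of_nat_le_iff of_nat_mult)
qed

lemma sum_sumprod_card_fibres_le:
  fixes A :: "(real^'n) set"
  assumes "finite A" "inj_on (\<lambda>x. x * x) X"
  shows "(\<Sum>x\<in>X. sumprod_card {v\<in>A. v$i = x}) \<le> sumprod_card A"
proof -
  have "(\<Sum>x\<in>X. card (sumset {v\<in>A. v$i = x} {v\<in>A. v$i = x})) \<le> card (sumset A A)"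
    unfolding sumset_eq_image2 using assms(1)
    by (rule sum_card_image2_fibres_le) (auto simp: inj_on_def)
  moreover have "(\<Sum>x\<in>X. card (prodset {v\<in>A. v$i = x} {v\<in>A. v$i = x})) \<le> card (prodset A A)"
    unfolding prodset_eq_image2 using assms
    by (intro sum_card_image2_fibres_le[where g = "(*)"]) simp_all
  ultimately show ?thesis
    unfolding sumprod_card_def sum.distrib
    by (intro add_mono) (simp_all only: of_nat_sum[symmetric] of_nat_le_iff)
qed

lemma exists_half_inj_on_square:
  fixes X :: "real set"
  assumes "finite X" "0 \<notin> X"
  obtains Y where "Y \<subseteq> X" "card X \<le> 2 * card Y" "inj_on (\<lambda>x. x * x) Y"
proof -
  let ?P = "{x\<in>X. 0 < x}" and ?N = "{x\<in>X. x < 0}"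
  have "x \<in> ?P \<union> ?N" if "x \<in> X" for x
    using that assms(2) by (cases x "0::real" rule: linorder_cases) auto
  then have "X = ?P \<union> ?N"
    by auto
  moreover have "card (?P \<union> ?N) = card ?P + card ?N"
    using assms(1) by (intro card_Un_disjoint) auto
  ultimately have "card X = card ?P + card ?N"
    by simp
  then have "card X \<le> 2 * card ?P \<or> card X \<le> 2 * card ?N"
    by linarith
  moreover have "inj_on (\<lambda>x. x * x) ?P" "inj_on (\<lambda>x. x * x) ?N"
    by (auto simp: inj_on_def square_eq_iff)
  ultimately show ?thesis
    using that[of ?P] that[of ?N] by blast
qed

lemma exists_large_fibre:
  assumes "finite A" "A \<noteq> {}"
  obtains z where "z \<in> g ` A" "card A \<le> card (g ` A) * card {a\<in>A. g a = z}"
proof -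
  let ?f = "\<lambda>z. card {a\<in>A. g a = z}"
  have "Max (?f ` g ` A) \<in> ?f ` g ` A"
    using assms by (intro Max_in) auto
  then obtain z where z: "z \<in> g ` A" "?f z = Max (?f ` g ` A)"
    by (metis (no_types, lifting) imageE)
  have "card A = sum ?f (g ` A)"
    using assms(1) by (rule card_eq_sum_card_fibres)
  also have "\<dots> \<le> card (g ` A) * ?f z"
  proof -
    have "?f y \<le> ?f z" if "y \<in> g ` A" for y
      unfolding z(2) using assms(1) that by (intro Max_ge) auto
    then show ?thesis
      using sum_bounded_above[of "g ` A" ?f "?f z"] by simp
  qed
  finally show ?thesis
    using that z(1) by blast
qed

lemma exists_active_subset:
  fixes A :: "(real^'n) set"
  assumes "finite A" "A \<noteq> {}"
  obtains A' where "A' \<subseteq> A" "A' \<in> active_family CARD('n)" "card A \<le> 2 ^ CARD('n) * card A'"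
proof -
  let ?zeros = "\<lambda>v::real^'n. {j. v$j = 0}"
  obtain z where z: "card A \<le> card (?zeros ` A) * card {v\<in>A. ?zeros v = z}"
    using exists_large_fibre[OF assms, of ?zeros] by blast
  let ?A' = "{v\<in>A. ?zeros v = z}"
  have "active_coords ?A' (- z)"
    unfolding active_coords_def
  proof (intro conjI ballI allI impI)
    fix v w j assume "v \<in> ?A'" "w \<in> ?A'" "j \<notin> - z"
    then show "v$j = w$j" by auto
  next
    fix v j assume "v \<in> ?A'" "j \<in> - z"
    then show "v$j \<noteq> 0" by auto
  qed
  moreover have "card (- z) \<le> CARD('n)"
    by (rule card_mono) auto
  ultimately have "?A' \<in> active_family CARD('n)"
    unfolding active_family_def by blast
  moreover have "card (?zeros ` A) \<le> 2 ^ CARD('n)"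
    using card_mono[of "UNIV :: 'n set set" "?zeros ` A"] by (simp add: card_UNIV_set)
  then have "card A \<le> 2 ^ CARD('n) * card ?A'"
    using z by (meson le_trans mult_le_mono1)
  ultimately show ?thesis
    using that[of ?A'] by blast
qed

section \<open>Bounds of the form \<open>c x\<^sup>p / (1 + ln x)\<^sup>E\<close>\<close>

definition pow_log :: "real \<Rightarrow> real \<Rightarrow> real \<Rightarrow> real \<Rightarrow> real" where
  "pow_log c p E x = c * x powr p / (1 + ln x) powr E"

text \<open>Normal form of the statement that \<open>|A + A| + |A A|\<close> is at least \<open>|A|\<^sup>p\<close> up to constant and
  logarithmic factors.  Since \<open>pow_log c p E 0 = 0\<close>, empty and infinite sets satisfy it trivially.\<close>

definition sumprod_lower_bound :: "'a::{plus,times} set set \<Rightarrow> real \<Rightarrow> bool" where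
  "sumprod_lower_bound \<A> p \<longleftrightarrow> (\<exists>c>0. \<exists>E\<ge>0. \<forall>A\<in>\<A>. pow_log c p E (card A) \<le> sumprod_card A)"

lemma pow_log_zero [simp]: "pow_log c p E 0 = 0"
  by (simp add: pow_log_def)

lemma pow_log_one [simp]: "pow_log c p E 1 = c"
  by (simp add: pow_log_def)

lemma one_plus_ln_powr_pos:
  fixes x :: real
  assumes "1 \<le> x"
  shows "0 < (1 + ln x) powr E"
proof -
  have "0 < 1 + ln x"
    using ln_ge_zero[OF assms] by linarith
  then show ?thesis
    by simp
qed

lemma pow_log_le_sumprod_card_of_card_le_one:
  assumes "card A \<le> 1" "c \<le> 2"
  shows "pow_log c p E (card A) \<le> sumprod_card A"
proof (cases "card A = 1")
  case True
  then obtain a where "A = {a}"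
    by (rule card_1_singletonE)
  then show ?thesis
    using assms(2) by simp
next
  case False
  then have "card A = 0"
    using assms(1) by linarith
  then show ?thesis
    by (simp add: sumprod_card_nonneg)
qed

lemma pow_log_antimono:
  assumes "0 \<le> c" "c \<le> c'" "E' \<le> E" "1 \<le> x"
  shows "pow_log c p E x \<le> pow_log c' p E' x"
proof -
  have "1 \<le> 1 + ln x"
    using assms by simp
  then have "(1 + ln x) powr E' \<le> (1 + ln x) powr E"
    using assms by (intro powr_mono)
  then have "c * x powr p / (1 + ln x) powr E \<le> c * x powr p / (1 + ln x) powr E'"
    using assms one_plus_ln_powr_pos[OF assms(4)] by (intro divide_left_mono mult_pos_pos) auto
  also have "\<dots> \<le> c' * x powr p / (1 + ln x) powr E'"
    using assms by (intro divide_right_mono mult_right_mono) auto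
  finally show ?thesis
    by (simp add: pow_log_def)
qed

lemma pow_log_ge_larger_log:
  assumes "0 \<le> c" "0 \<le> p" "0 \<le> E" "1 \<le> y" "y \<le> x" "x \<le> N"
  shows "c * y powr p / (1 + ln N) powr E \<le> pow_log c p E x"
proof -
  have "0 \<le> ln x"
    using assms by simp
  then have "(1 + ln x) powr E \<le> (1 + ln N) powr E"
    using assms by (intro powr_mono2) auto
  moreover have "y powr p \<le> x powr p"
    using assms by (intro powr_mono2) auto
  ultimately show ?thesis
    using assms one_plus_ln_powr_pos[of x E] unfolding pow_log_def
    by (intro frac_le mult_left_mono) auto
qed

lemma pow_log_shrink:
  assumes "0 \<le> c" "0 \<le> p" "0 \<le> E" "0 < W" "1 \<le> m" "m \<le> n" "n \<le> W * m"
  shows "pow_log (c / W powr p) p E n \<le> pow_log c p E m"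
proof -
  have "(n / W) powr p \<le> m powr p"
    using assms by (intro powr_mono2) (auto simp: field_simps)
  then have "n powr p / W powr p \<le> m powr p"
    using assms by (simp add: powr_divide)
  moreover have "0 \<le> ln m"
    using assms by simp
  then have "(1 + ln m) powr E \<le> (1 + ln n) powr E"
    using assms by (intro powr_mono2) auto
  ultimately have "c * (n powr p / W powr p) / (1 + ln n) powr E \<le> c * m powr p / (1 + ln m) powr E"
    using assms one_plus_ln_powr_pos[of m E] by (intro frac_le mult_left_mono) auto
  then show ?thesis
    by (simp add: pow_log_def)
qed

lemma pow_log_le_ln_powr:
  assumes "0 < C" "2 \<le> x"
  shows "pow_log (C * min 1 (ln 2 powr D)) p (max 0 (- D)) x \<le> C * x powr p * ln x powr D"
proof -
  have ln2: "0 < ln (2::real)"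
    by simp
  have lnx: "ln 2 \<le> ln x"
    using assms by simp
  have "min 1 (ln 2 powr D) / (1 + ln x) powr max 0 (- D) \<le> ln x powr D"
  proof (cases "D \<ge> 0")
    case True
    have "ln 2 powr D \<le> ln x powr D"
      using True ln2 lnx by (intro powr_mono2) auto
    then show ?thesis
      using True by (simp add: min.coboundedI2)
  next
    case False
    have "ln x powr (- D) \<le> (1 + ln x) powr (- D)"
      using False ln2 lnx by (intro powr_mono2) linarith+
    moreover have "0 < ln x powr (- D)"
      using assms(2) by simp
    ultimately have "1 / (1 + ln x) powr (- D) \<le> 1 / ln x powr (- D)"
      using one_plus_ln_powr_pos[of x "- D"] assms(2) by (intro divide_left_mono mult_pos_pos) auto
    also have "\<dots> = ln x powr D"
      using ln2 lnx by (simp add: powr_minus_divide)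
    finally have "1 / (1 + ln x) powr max 0 (- D) \<le> ln x powr D"
      using False by simp
    moreover have "min 1 (ln 2 powr D) / (1 + ln x) powr max 0 (- D) \<le> 1 / (1 + ln x) powr max 0 (- D)"
      using ln2 lnx by (intro divide_right_mono) auto
    ultimately show ?thesis
      by linarith
  qed
  then have "C * x powr p * (min 1 (ln 2 powr D) / (1 + ln x) powr max 0 (- D)) \<le> C * x powr p * ln x powr D"
    using assms by (intro mult_left_mono) auto
  then show ?thesis
    by (simp add: pow_log_def mult_ac)
qed

lemma ln_powr_le_pow_log:
  assumes "0 \<le> c" "0 \<le> E" "2 \<le> x"
  shows "c / 3 powr E * x powr p * ln x powr (- E) \<le> pow_log c p E x"
proof -
  have "ln 2 \<le> ln x"
    using assms(3) by simp
  then have lnx: "1/2 \<le> ln x"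
    using ln2_ge_two_thirds by linarith
  then have "(1 + ln x) powr E \<le> (3 * ln x) powr E"
    using assms(2) by (intro powr_mono2) auto
  also have "\<dots> = 3 powr E * ln x powr E"
    using lnx by (simp add: powr_mult)
  finally have "c * x powr p / (3 powr E * ln x powr E) \<le> c * x powr p / (1 + ln x) powr E"
    using assms(1) lnx by (intro divide_left_mono) auto
  moreover have "c / 3 powr E * x powr p * ln x powr (- E) = c * x powr p / (3 powr E * ln x powr E)"
    using lnx by (simp add: powr_minus field_simps)
  ultimately show ?thesis
    by (simp add: pow_log_def)
qed

lemma wide_projection_ineq:
  fixes N H K T \<delta> q :: real
  assumes "1 \<le> N" "1 \<le> H" "0 < K" "0 < T" "0 \<le> \<delta>" "N \<le> T * K * H" "N powr (1 / q) / H \<le> K"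
  shows "N powr (1 + \<delta> / q) / H powr (1 + \<delta>) \<le> T * K powr (1 + \<delta>)"
proof -
  have "N powr (\<delta> / q) / H powr \<delta> = (N powr (1 / q) / H) powr \<delta>"
    using assms by (simp add: powr_divide powr_powr)
  also have "\<dots> \<le> K powr \<delta>"
    using assms by (intro powr_mono2) auto
  finally have "N powr (\<delta> / q) / H powr \<delta> \<le> K powr \<delta>" .
  moreover have "N / H \<le> T * K"
    using assms by (simp add: field_simps)
  ultimately have "(N / H) * (N powr (\<delta> / q) / H powr \<delta>) \<le> (T * K) * K powr \<delta>"
    using assms by (intro mult_mono) auto
  then show ?thesis
    using assms by (simp add: powr_add)
qed

lemma narrow_projection_ineq:
  fixes N H K T \<delta> d :: real
  assumes "0 < d" "1 \<le> N" "1 \<le> H" "0 < K" "0 < T" "0 \<le> \<delta>" "N \<le> T * K * H"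
    and "K < N powr (1 / (d + 1)) / H"
  shows "N powr (1 + \<delta> / (d + 1)) / H \<le> K * T powr (1 + \<delta> / d)"
proof -
  have "N powr (d / (d + 1)) * N powr (1 / (d + 1)) = N"
    using assms by (simp add: powr_add[symmetric] add_divide_distrib[symmetric])
  moreover have "K * H \<le> N powr (1 / (d + 1))"
    using assms by (simp add: field_simps)
  ultimately have "N powr (d / (d + 1)) * (K * H) \<le> N"
    by (metis mult_left_mono powr_ge_zero)
  also have "\<dots> \<le> T * (K * H)"
    using assms by (simp add: mult.assoc)
  finally have "N powr (d / (d + 1)) \<le> T"
    using assms by simp
  then have "(N powr (d / (d + 1))) powr (\<delta> / d) \<le> T powr (\<delta> / d)"
    using assms by (intro powr_mono2) auto
  then have "N powr (\<delta> / (d + 1)) \<le> T powr (\<delta> / d)"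
    using assms by (simp add: powr_powr)
  moreover have "N / H \<le> K * T"
    using assms by (simp add: field_simps)
  ultimately have "(N / H) * N powr (\<delta> / (d + 1)) \<le> (K * T) * T powr (\<delta> / d)"
    using assms by (intro mult_mono) auto
  then show ?thesis
    using assms by (simp add: powr_add)
qed

lemma ln_powr_bound_of_sumprod_lower_bound:
  assumes "sumprod_lower_bound (UNIV :: 'a::{plus,times} set set) p"
  shows "\<exists>C>0. \<exists>D. \<forall>B::'a set. finite B \<and> B \<noteq> {} \<longrightarrow>
    C * real (card B) powr p * ln (real (card B)) powr D \<le> sumprod_card B"
proof -
  obtain c E where c: "c > 0" "E \<ge> 0"
    and bound: "\<And>B::'a set. pow_log c p E (card B) \<le> sumprod_card B"
    using assms unfolding sumprod_lower_bound_def by blast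
  have "c / 3 powr E * real (card B) powr p * ln (real (card B)) powr (- E) \<le> sumprod_card B"
    if "finite B" "B \<noteq> {}" for B :: "'a set"
  proof (cases "card B = 1")
    case True
    then show ?thesis
      by (simp add: sumprod_card_nonneg)
  next
    case False
    moreover have "0 < card B"
      using that by (simp add: card_gt_0_iff)
    ultimately have "2 \<le> real (card B)"
      by simp
    then show ?thesis
      using ln_powr_le_pow_log[of c E "real (card B)" p] bound[of B] c by linarith
  qed
  then show ?thesis
    using c by (intro exI[of _ "c / 3 powr E"] exI[of _ "- E"]) auto
qed

lemma sumprod_lower_bound_of_ln_powr_bound:
  assumes "\<exists>C>0. \<exists>D. \<forall>B::'a::{plus,times} set. finite B \<and> B \<noteq> {} \<longrightarrow>
    C * real (card B) powr p * ln (real (card B)) powr D \<le> sumprod_card B"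
  shows "sumprod_lower_bound (UNIV :: 'a set set) p"
proof -
  obtain C D where C: "C > 0" and bound: "\<And>B::'a set. finite B \<Longrightarrow> B \<noteq> {} \<Longrightarrow>
      C * real (card B) powr p * ln (real (card B)) powr D \<le> sumprod_card B"
    using assms by blast
  define c where "c = min 2 (C * min 1 (ln 2 powr D))"
  have c: "c > 0"
    using C by (simp add: c_def)
  have "pow_log c p (max 0 (- D)) (card B) \<le> sumprod_card B" for B :: "'a set"
  proof (cases "card B \<le> 1")
    case True
    then show ?thesis
      by (rule pow_log_le_sumprod_card_of_card_le_one) (simp add: c_def)
  next
    case False
    then have B: "finite B" "B \<noteq> {}" "2 \<le> real (card B)"
      using card.infinite by force+
    have "pow_log c p (max 0 (- D)) (card B) \<le> pow_log (C * min 1 (ln 2 powr D)) p (max 0 (- D)) (card B)"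
      using c B(3) by (intro pow_log_antimono) (auto simp: c_def)
    also have "\<dots> \<le> C * real (card B) powr p * ln (real (card B)) powr D"
      using C B(3) by (rule pow_log_le_ln_powr)
    also have "\<dots> \<le> sumprod_card B"
      using B(1,2) by (rule bound)
    finally show ?thesis .
  qed
  then show ?thesis
    unfolding sumprod_lower_bound_def using c max.cobounded1[of 0 "- D"] by blast
qed

section \<open>Induction on the number of active coordinates\<close>

lemma pow_log_le_sumprod_card_wide:
  fixes A :: "(real^'n) set" and d :: nat
  assumes one_dim: "\<And>B::real set. pow_log c (1 + \<delta>) E (card B) \<le> sumprod_card B"
    and "0 < c" "0 \<le> E" "0 \<le> \<delta>"
    and A: "finite A" "A \<noteq> {}" "active_coords A S"
    and X: "X \<subseteq> (\<lambda>v. v$i) ` A" "\<And>x. x \<in> X \<Longrightarrow> t \<le> card {v\<in>A. v$i = x}"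
    and cover: "card A \<le> real t * card X * (1 + ln (card A))"
    and wide: "card A powr (1 / (d + 1)) / (1 + ln (card A)) \<le> card X"
  shows "pow_log c (1 + \<delta> / (d + 1)) (1 + \<delta> + E) (card A) \<le> sumprod_card A"
proof -
  define N H K where "N = real (card A)" and "H = 1 + ln N" and "K = real (card X)"
  have N: "1 \<le> N"
    using A by (simp add: N_def Suc_le_eq card_gt_0_iff)
  then have H: "1 \<le> H"
    by (simp add: H_def)
  have "0 < N powr (1 / (d + 1)) / H"
    using N H by simp
  then have "0 < K"
    using wide by (simp add: N_def H_def K_def)
  then have K: "1 \<le> K"
    by (simp add: K_def)
  have T: "0 < real t"
    using cover N by (auto simp: N_def intro: Nat.gr0I)
  have "card X \<le> card A"
    using card_mono[OF finite_imageI[OF A(1)] X(1)] card_image_le[OF A(1), of "\<lambda>v. v$i"]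
    by linarith
  then have KN: "K \<le> N"
    by (simp add: K_def N_def)
  have "pow_log c (1 + \<delta> / (d + 1)) (1 + \<delta> + E) N
      = c / H powr E * (N powr (1 + \<delta> / (d + 1)) / H powr (1 + \<delta>))"
    using H by (simp add: pow_log_def H_def powr_add field_simps)
  also have "\<dots> \<le> c / H powr E * (real t * K powr (1 + \<delta>))"
  proof -
    have "N \<le> real t * K * H" "N powr (1 / (d + 1)) / H \<le> K"
      using cover wide by (simp_all add: N_def H_def K_def)
    then show ?thesis
      using wide_projection_ineq[OF N H _ T \<open>0 \<le> \<delta>\<close>] K \<open>0 < c\<close> by (intro mult_left_mono) auto
  qed
  also have "\<dots> = real t * (c * K powr (1 + \<delta>) / H powr E)"
    by simp
  also have "\<dots> \<le> real t * pow_log c (1 + \<delta>) E K"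
    using pow_log_ge_larger_log[of c "1 + \<delta>" E K K N] \<open>0 < c\<close> assms(3,4) K KN
    by (intro mult_left_mono) (auto simp: H_def)
  also have "\<dots> \<le> real t * sumprod_card X"
    using one_dim[of X] by (intro mult_left_mono) (auto simp: K_def)
  also have "\<dots> \<le> sumprod_card A"
    using A(1,3) X by (rule sumprod_card_ge_card_fibres)
  finally show ?thesis
    by (simp add: N_def)
qed

lemma pow_log_le_sumprod_card_fibre:
  fixes A :: "(real^'n) set" and d :: nat and T :: real
  assumes IH: "\<And>B :: (real^'n) set. B \<in> active_family d \<Longrightarrow> pow_log c (1 + \<delta> / d) E (card B) \<le> sumprod_card B"
    and "0 \<le> c" "0 \<le> E" "0 \<le> \<delta>"
    and A: "finite A" "active_coords A S" "card S \<le> Suc d" "i \<in> S"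
    and T: "1 \<le> T" "T \<le> card {v\<in>A. v$i = x}"
  shows "c * T powr (1 + \<delta> / d) / (1 + ln (card A)) powr E \<le> sumprod_card {v\<in>A. v$i = x}"
proof -
  have "card {v\<in>A. v$i = x} \<le> card A"
    using A(1) by (intro card_mono) auto
  then have "c * T powr (1 + \<delta> / d) / (1 + ln (card A)) powr E
      \<le> pow_log c (1 + \<delta> / d) E (card {v\<in>A. v$i = x})"
    using assms(2-4) T by (intro pow_log_ge_larger_log) auto
  also have "\<dots> \<le> sumprod_card {v\<in>A. v$i = x}"
    using A(2-4) by (intro IH fibre_mem_active_family)
  finally show ?thesis .
qed

lemma pow_log_le_sumprod_card_narrow:
  fixes A :: "(real^'n) set" and d :: nat
  assumes IH: "\<And>B :: (real^'n) set. B \<in> active_family d \<Longrightarrow> pow_log c (1 + \<delta> / d) E (card B) \<le> sumprod_card B"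
    and "0 < c" "0 \<le> E" "0 \<le> \<delta>" "1 \<le> d"
    and A: "finite A" "A \<noteq> {}" "active_coords A S" "card S \<le> Suc d" "i \<in> S"
    and X: "X \<subseteq> (\<lambda>v. v$i) ` A" "\<And>x. x \<in> X \<Longrightarrow> t \<le> card {v\<in>A. v$i = x}"
    and cover: "card A \<le> real t * card X * (1 + ln (card A))"
    and narrow: "card X < card A powr (1 / (d + 1)) / (1 + ln (card A))"
  shows "pow_log (c / 2) (1 + \<delta> / (d + 1)) (1 + E) (card A) \<le> sumprod_card A"
proof -
  define N H K T where "N = real (card A)" and "H = 1 + ln N" and "K = real (card X)" and "T = real t"
  have N: "1 \<le> N"
    using A by (simp add: N_def Suc_le_eq card_gt_0_iff)
  then have H: "1 \<le> H"
    by (simp add: H_def)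
  have cover': "N \<le> T * K * H"
    using cover by (simp add: N_def H_def K_def T_def)
  then have "0 < T * K * H"
    using N by linarith
  then have "0 < K" "0 < T"
    using H by (auto simp: K_def T_def zero_less_mult_iff)
  then have T: "1 \<le> T"
    by (simp add: T_def)
  have "finite X"
    using A(1) X(1) finite_subset by blast
  moreover have "v$i \<noteq> 0" if "v \<in> A" for v
    using A(3,5) that unfolding active_coords_def by blast
  then have "0 \<notin> X"
    using X(1) by auto
  ultimately obtain Y where Y: "Y \<subseteq> X" "card X \<le> 2 * card Y" "inj_on (\<lambda>x. x * x) Y"
    by (rule exists_half_inj_on_square)
  have fibre: "c * T powr (1 + \<delta> / d) / H powr E \<le> sumprod_card {v\<in>A. v$i = x}" if "x \<in> Y" for x
  proof -
    have "T \<le> card {v\<in>A. v$i = x}"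
      using X(2)[of x] Y(1) that by (auto simp: T_def)
    then show ?thesis
      unfolding H_def N_def using assms(2-4)
      by (intro pow_log_le_sumprod_card_fibre[OF IH _ _ _ A(1,3-5) T]) auto
  qed
  have "pow_log (c / 2) (1 + \<delta> / (d + 1)) (1 + E) N
      = c / 2 / H powr E * (N powr (1 + \<delta> / (d + 1)) / H)"
    using H by (simp add: pow_log_def H_def powr_add field_simps)
  also have "\<dots> \<le> c / 2 / H powr E * (K * T powr (1 + \<delta> / d))"
  proof -
    have "K < N powr (1 / (d + 1)) / H"
      using narrow by (simp add: N_def H_def K_def)
    then show ?thesis
      using narrow_projection_ineq[of "real d" N H K T \<delta>] assms(2-5) N H cover' \<open>0 < K\<close> \<open>0 < T\<close>
      by (intro mult_left_mono) (auto simp: add.commute)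
  qed
  also have "\<dots> = K / 2 * (c * T powr (1 + \<delta> / d) / H powr E)"
    by simp
  also have "\<dots> \<le> real (card Y) * (c * T powr (1 + \<delta> / d) / H powr E)"
    using Y(2) \<open>0 < c\<close> by (intro mult_right_mono) (auto simp: K_def)
  also have "\<dots> \<le> (\<Sum>x\<in>Y. sumprod_card {v\<in>A. v$i = x})"
    using sum_mono[OF fibre] by simp
  also have "\<dots> \<le> sumprod_card A"
    using A(1) Y(3) by (rule sum_sumprod_card_fibres_le)
  finally show ?thesis
    by (simp add: N_def)
qed

lemma pow_log_le_sumprod_card_wide_or_narrow:
  fixes A :: "(real^'n) set" and d :: nat
  assumes one_dim: "\<And>B::real set. pow_log c1 (1 + \<delta>) E1 (card B) \<le> sumprod_card B"
    and IH: "\<And>B :: (real^'n) set. B \<in> active_family d \<Longrightarrow> pow_log c2 (1 + \<delta> / d) E2 (card B) \<le> sumprod_card B"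
    and "0 < c1" "0 \<le> E1" "0 < c2" "0 \<le> E2" "0 \<le> \<delta>" "1 \<le> d"
    and A: "finite A" "A \<noteq> {}" "active_coords A S" "card S \<le> Suc d" "i \<in> S"
  shows "pow_log c1 (1 + \<delta> / (d + 1)) (1 + \<delta> + E1) (card A) \<le> sumprod_card A
    \<or> pow_log (c2 / 2) (1 + \<delta> / (d + 1)) (1 + E2) (card A) \<le> sumprod_card A"
proof -
  let ?h = "\<lambda>x. card {v\<in>A. v$i = x}"
  obtain t where "1 \<le> t"
    and cover: "card A \<le> real t * card {x \<in> (\<lambda>v. v$i) ` A. t \<le> ?h x} * (1 + ln (card A))"
    using A(1,2) by (rule exists_large_fibre_level)
  let ?X = "{x \<in> (\<lambda>v. v$i) ` A. t \<le> ?h x}"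
  have X: "?X \<subseteq> (\<lambda>v. v$i) ` A" "\<And>x. x \<in> ?X \<Longrightarrow> t \<le> ?h x"
    by auto
  consider (wide) "card A powr (1 / (d + 1)) / (1 + ln (card A)) \<le> card ?X"
    | (narrow) "card ?X < card A powr (1 / (d + 1)) / (1 + ln (card A))"
    by linarith
  then show ?thesis
  proof cases
    case wide
    then show ?thesis
      using pow_log_le_sumprod_card_wide[OF one_dim assms(3,4,7) A(1-3) X cover] by blast
  next
    case narrow
    then show ?thesis
      using pow_log_le_sumprod_card_narrow[OF IH assms(5-8) A X cover] by blast
  qed
qed

lemma pow_log_le_sumprod_card_active:
  fixes A :: "(real^'n) set" and d :: nat
  assumes one_dim: "\<And>B::real set. pow_log c1 (1 + \<delta>) E1 (card B) \<le> sumprod_card B"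
    and IH: "\<And>B :: (real^'n) set. B \<in> active_family d \<Longrightarrow> pow_log c2 (1 + \<delta> / d) E2 (card B) \<le> sumprod_card B"
    and "0 < c1" "0 \<le> E1" "0 < c2" "0 \<le> E2" "0 \<le> \<delta>" "1 \<le> d"
    and A: "A \<in> active_family (Suc d)"
  shows "pow_log (min c1 (c2 / 2)) (1 + \<delta> / (d + 1)) (max (1 + \<delta> + E1) (1 + E2)) (card A)
    \<le> sumprod_card A"
proof -
  let ?p = "1 + \<delta> / (d + 1)"
  obtain S where S: "card S \<le> Suc d" "active_coords A S"
    using A by (auto simp: active_family_def)
  have "c1 \<le> 2"
    using one_dim[of "{0}"] by simp
  show ?thesis
  proof (cases "card A \<le> 1")
    case True
    then show ?thesis
      using \<open>c1 \<le> 2\<close> by (intro pow_log_le_sumprod_card_of_card_le_one) auto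
  next
    case False
    then have fin: "finite A" "A \<noteq> {}" and N: "1 \<le> real (card A)"
      using card.infinite by force+
    have "S \<noteq> {}"
      using False active_coords_empty_card_le S(2) by blast
    then obtain i where "i \<in> S"
      by blast
    have "pow_log (min c1 (c2 / 2)) ?p (max (1 + \<delta> + E1) (1 + E2)) (card A)
        \<le> pow_log c1 ?p (1 + \<delta> + E1) (card A)"
      "pow_log (min c1 (c2 / 2)) ?p (max (1 + \<delta> + E1) (1 + E2)) (card A)
        \<le> pow_log (c2 / 2) ?p (1 + E2) (card A)"
      using assms(3,5) N by (intro pow_log_antimono; simp)+
    then show ?thesis
      using pow_log_le_sumprod_card_wide_or_narrow[OF one_dim IH assms(3-8) fin S(2,1) \<open>i \<in> S\<close>]
      by linarith
  qed
qed

lemma sumprod_lower_bound_active_family_Suc: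
  assumes one_dim: "sumprod_lower_bound (UNIV :: real set set) (1 + \<delta>)"
    and IH: "sumprod_lower_bound (active_family d :: (real^'n) set set) (1 + \<delta> / d)"
    and "0 \<le> \<delta>" "1 \<le> d"
  shows "sumprod_lower_bound (active_family (Suc d) :: (real^'n) set set) (1 + \<delta> / Suc d)"
proof -
  obtain c1 E1 where "0 < c1" "0 \<le> E1"
    and bound1: "\<And>B::real set. pow_log c1 (1 + \<delta>) E1 (card B) \<le> sumprod_card B"
    using one_dim unfolding sumprod_lower_bound_def by blast
  obtain c2 E2 where "0 < c2" "0 \<le> E2"
    and bound2: "\<And>B :: (real^'n) set. B \<in> active_family d \<Longrightarrow> pow_log c2 (1 + \<delta> / d) E2 (card B) \<le> sumprod_card B"
    using IH unfolding sumprod_lower_bound_def by blast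
  have "\<forall>A \<in> active_family (Suc d) :: (real^'n) set set.
      pow_log (min c1 (c2 / 2)) (1 + \<delta> / Suc d) (max (1 + \<delta> + E1) (1 + E2)) (card A) \<le> sumprod_card A"
    using pow_log_le_sumprod_card_active[OF bound1 bound2 \<open>0 < c1\<close> \<open>0 \<le> E1\<close> \<open>0 < c2\<close> \<open>0 \<le> E2\<close> assms(3,4)]
    by simp
  moreover have "0 < min c1 (c2 / 2)" "0 \<le> max (1 + \<delta> + E1) (1 + E2)"
    using \<open>0 < c1\<close> \<open>0 < c2\<close> \<open>0 \<le> E2\<close> by auto
  ultimately show ?thesis
    unfolding sumprod_lower_bound_def by blast
qed

lemma sumprod_lower_bound_active_family_one:
  assumes "sumprod_lower_bound (UNIV :: real set set) p"
  shows "sumprod_lower_bound (active_family 1 :: (real^'n) set set) p"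
proof -
  obtain c E where "0 < c" "0 \<le> E" and bound: "\<And>B::real set. pow_log c p E (card B) \<le> sumprod_card B"
    using assms unfolding sumprod_lower_bound_def by blast
  have "pow_log c p E (card A) \<le> sumprod_card A" if A: "A \<in> active_family 1" for A :: "(real^'n) set"
  proof -
    obtain S where S: "card S \<le> 1" "active_coords A S"
      using A unfolding active_family_def by blast
    show ?thesis
    proof (cases "finite A \<and> S \<noteq> {}")
      case False
      then have "card A \<le> 1"
        using active_coords_empty_card_le[of A] S(2) card.infinite[of A] by (cases "S = {}") auto
      moreover have "c \<le> 2"
        using bound[of "{0}"] by simp
      ultimately show ?thesis
        by (rule pow_log_le_sumprod_card_of_card_le_one)
    next
      case True
      then obtain i where "S = {i}"
        using S(1) by (metis card_0_eq card_1_singletonE finite le_neq_implies_less less_one)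
      have "inj_on (\<lambda>v. v$i) A"
      proof (rule inj_onI)
        fix v w assume vw: "v \<in> A" "w \<in> A" "v$i = w$i"
        have "v$j = w$j" if "j \<noteq> i" for j
          using vw(1,2) S(2) that \<open>S = {i}\<close> unfolding active_coords_def by blast
        then have "v$j = w$j" for j
          using vw(3) by (cases "j = i") auto
        then show "v = w"
          by (simp add: vec_eq_iff)
      qed
      then have "card ((\<lambda>v. v$i) ` A) = card A"
        by (rule card_image)
      moreover have "real 1 * sumprod_card ((\<lambda>v. v$i) ` A) \<le> sumprod_card A"
        using True S(2) by (intro sumprod_card_ge_card_fibres) (auto simp: Suc_le_eq card_gt_0_iff)
      ultimately show ?thesis
        using bound[of "(\<lambda>v. v$i) ` A"] by simp
    qed
  qed
  then show ?thesis
    using \<open>0 < c\<close> \<open>0 \<le> E\<close> unfolding sumprod_lower_bound_def by blast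
qed

lemma sumprod_lower_bound_active_family:
  assumes "sumprod_lower_bound (UNIV :: real set set) (1 + \<delta>)" "0 \<le> \<delta>" "1 \<le> d"
  shows "sumprod_lower_bound (active_family d :: (real^'n) set set) (1 + \<delta> / d)"
  using assms(3)
proof (induction d rule: dec_induct)
  case base
  then show ?case
    using sumprod_lower_bound_active_family_one[OF assms(1)] by simp
next
  case (step d)
  then show ?case
    using sumprod_lower_bound_active_family_Suc[OF assms(1) _ assms(2)] by blast
qed

lemma sumprod_lower_bound_UNIV_of_active_family:
  assumes "sumprod_lower_bound (active_family CARD('n) :: (real^'n) set set) p" "0 \<le> p"
  shows "sumprod_lower_bound (UNIV :: (real^'n) set set) p"
proof -
  obtain c E where "0 < c" "0 \<le> E"
    and bound: "\<And>A :: (real^'n) set. A \<in> active_family CARD('n) \<Longrightarrow> pow_log c p E (card A) \<le> sumprod_card A"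
    using assms(1) unfolding sumprod_lower_bound_def by blast
  define W :: real where "W = 2 ^ CARD('n)"
  have "pow_log (c / W powr p) p E (card A) \<le> sumprod_card A" for A :: "(real^'n) set"
  proof (cases "finite A \<and> A \<noteq> {}")
    case False
    then show ?thesis
      by (auto simp: sumprod_card_nonneg)
  next
    case True
    then obtain A' where A': "A' \<subseteq> A" "A' \<in> active_family CARD('n)" "card A \<le> 2 ^ CARD('n) * card A'"
      using exists_active_subset by blast
    have "real (card A) \<le> real (2 ^ CARD('n) * card A')"
      using A'(3) by (rule of_nat_mono)
    then have "real (card A) \<le> W * real (card A')"
      by (simp add: W_def)
    moreover have "card A' \<le> card A" "card A' \<noteq> 0"
      using True A'(1,3) card_mono[of A A'] by auto
    ultimately have "pow_log (c / W powr p) p E (card A) \<le> pow_log c p E (card A')"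
      using \<open>0 < c\<close> \<open>0 \<le> E\<close> assms(2) by (intro pow_log_shrink) (auto simp: W_def)
    also have "\<dots> \<le> sumprod_card A'"
      using A'(2) by (rule bound)
    also have "\<dots> \<le> sumprod_card A"
      using True A'(1) by (intro sumprod_card_mono) auto
    finally show ?thesis .
  qed
  moreover have "0 < c / W powr p"
    using \<open>0 < c\<close> by (simp add: W_def)
  ultimately show ?thesis
    using \<open>0 \<le> E\<close> unfolding sumprod_lower_bound_def by blast
qed

theorem theorem1p1:
  fixes \<delta>\<^sub>1 :: real
  assumes "\<delta>\<^sub>1 > 0"
    and "\<exists>C>0. \<exists>D::real. \<forall>B::real set. finite B \<and> B \<noteq> {} \<longrightarrow>
           real (card (sumset B B)) + real (card (prodset B B))
             \<ge> C * real (card B) powr (1 + \<delta>\<^sub>1) * ln (real (card B)) powr D"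
  shows "\<exists>C>0. \<exists>D::real. \<forall>A::(real^'n) set. finite A \<and> A \<noteq> {} \<longrightarrow>
           real (card (sumset A A)) + real (card (prodset A A))
             \<ge> C * real (card A) powr (1 + \<delta>\<^sub>1 / real CARD('n)) * ln (real (card A)) powr D"
proof -
  have "sumprod_lower_bound (UNIV :: real set set) (1 + \<delta>\<^sub>1)"
    using assms(2) unfolding sumprod_card_def[symmetric] by (rule sumprod_lower_bound_of_ln_powr_bound)
  then have "sumprod_lower_bound (active_family CARD('n) :: (real^'n) set set) (1 + \<delta>\<^sub>1 / CARD('n))"
    using assms(1) by (intro sumprod_lower_bound_active_family) (auto simp: Suc_le_eq)
  then have "sumprod_lower_bound (UNIV :: (real^'n) set set) (1 + \<delta>\<^sub>1 / CARD('n))"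
    using assms(1) by (intro sumprod_lower_bound_UNIV_of_active_family) auto
  then show ?thesis
    unfolding sumprod_card_def[symmetric] by (rule ln_powr_bound_of_sumprod_lower_bound)
qed

end
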